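(* Assume that $\kappa_{\mathcal H}(X_i,X_i)<\infty$ almost surely for every $i\in\{1,\dots,n+1\}$, and that for every $y\in\mathcal Y$ the map $u\mapsto\ell(y,u)$ is convex and twice continuously differentiable with $u\mapsto\partial_2\ell(y,u)$ being $\beta_{\ell;2}$-Lipschitz continuous for some $\beta_{\ell;2}\in(0,\infty)$. Then for every $y,z\in\mathcal Y$ the Bouligand influence function $\mathrm{BIF}(\hat P^y_{n+1};T_\lambda,\hat P^z_{n+1})\in\mathcal H$ exists; it equals $\mathcal D_1\hat f_\lambda(\mathbf u;\cdot)(\mathbf w-\mathbf u)$, the Fréchet differential at $\mathbf u$ of the map $v\mapsto\hat f_\lambda(v;\cdot)$ applied to $\mathbf w-\mathbf u$; and $$\mathrm{BIF}(\hat P^y_{n+1};T_\lambda,\hat P^z_{n+1})=-\mathbf I_{\hat f}(X_{n+1},z)+\mathbf I_{\hat f}(X_{n+1},y),$$ where for every $z'\in\mathcal Y$, $\mathbf I_{\hat f}(X_{n+1},z')=-\frac1{n+1}\partial_2\ell(z',\hat f_{\lambda;D^z}(X_{n+1}))\,\big[\partial_2^2\hat{\mathbf R}_\lambda(\mathbf u;\hat f_{\lambda;D^z})\big]^+K_{X_{n+1}}\in\mathcal A$.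
   Context: Let $\mathcal X\subset\mathbb R^d$, $\mathcal Y\subset\mathbb R$, $D=\{(X_1,Y_1),\dots,(X_n,Y_n)\}$ and $X_{n+1}$ be given (random) data; $\mathcal H$ is an RKHS of functions $\mathcal X\to\mathbb R$ with kernel $\kappa_{\mathcal H}$, $K_x=\kappa_{\mathcal H}(x,\cdot)$, and $\mathcal A=\mathrm{span}\{K_{X_1},\dots,K_{X_{n+1}}\}$. $\ell:\mathcal Y\times\mathcal Y\to\mathbb R$ is a loss, $\partial_2,\partial_2^2$ its derivatives in the second argument, $\lambda>0$. Let $\mathcal M$ be the set of probability distributions on $\mathcal X\times\mathcal Y$ and $T_\lambda:\mathcal M\to\mathcal H$ a measurable map with $T_\lambda(Q)\in\arg\min_{f\in\mathcal H}\mathbb E_{(X,Y)\sim Q}[\ell(Y,f(X))]+\lambda\|f\|_{\mathcal H}^2$. The Bouligand influence function of $T_\lambda$ at $Q$ in the direction $Q'\ne Q$ is $\mathrm{BIF}(Q';T_\lambda,Q)=\lim_{t\to0^+}\frac{T_\lambda((1-t)Q+tQ')-T_\lambda(Q)}{t}$ (limit in $\mathcal H$), when it exists. For $z'\in\mathcal Y$, $\hat P^{z'}_{n+1}=\frac1{n+1}\delta_{(X_{n+1},z')}+\sum_{i=1}^n\frac1{n+1}\delta_{(X_i,Y_i)}$. Fix $y,z\in\mathcal Y$. For $v\in\mathbb R^{n+2}$ and $f\in\mathcal H$ let $\hat{\mathbf R}_\lambda(v;f)=\frac1{n+1}\sum_{i=1}^nv_i\ell(Y_i,f(X_i))+\frac{v_{n+1}}{n+1}\ell(z,f(X_{n+1}))+\frac{v_{n+2}}{n+1}\ell(y,f(X_{n+1}))+\lambda\|f\|^2_{\mathcal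 H}$, and let $\hat f_\lambda(v;\cdot)$ be its minimizer over $\mathcal H$ (unique for $v$ in an open neighbourhood of the segment between $\mathbf u$ and $\mathbf w$), where $\mathbf u=(1,\dots,1,1,0)$ and $\mathbf w=(1,\dots,1,0,1)$ in $\mathbb R^{n+2}$; thus $\hat f_\lambda(\mathbf u;\cdot)=\hat f_{\lambda;D^z}$, the minimizer of $\frac1{n+1}\sum_{(x,y')\in D^z}\ell(y',f(x))+\lambda\|f\|^2_{\mathcal H}$ with $D^z=D\cup\{(X_{n+1},z)\}$. The second Fréchet differential of $\hat{\mathbf R}_\lambda(v;\cdot)$ at $f$, viewed as an operator on $\mathcal H$, is $\partial_2^2\hat{\mathbf R}_\lambda(v;f)=\frac1{n+1}\sum_{i=1}^nv_i\partial_2^2\ell(Y_i,f(X_i))K_{X_i}\otimes K_{X_i}+\frac{v_{n+1}}{n+1}\partial_2^2\ell(z,f(X_{n+1}))K_{X_{n+1}}\otimes K_{X_{n+1}}+\frac{v_{n+2}}{n+1}\partial_2^2\ell(y,f(X_{n+1}))K_{X_{n+1}}\otimes K_{X_{n+1}}+2\lambda\,\mathrm{Id}$, where $(g\otimes g)h=\langle g,h\rangle_{\mathcal H}g$; $[\cdot]^+$ denotes the inverse of its restriction to $\mathcal A$. *)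

theory Defs
  imports "HOL-Analysis.Analysis" "HOL-Probability.Probability"
begin

text \<open>
The RKHS is represented by a real Hilbert space 'h together with its
canonical feature map K :: 'x => 'h (K x = kappa(x, .)); the value of f in 'h at the
point x is given by the reproducing property f(x) = inner f (K x).
The training data D are indexed by a finite type 'i (so n = CARD('i)); the test point
X_{n+1} is Xn.  Vectors v in R^{n+2} are elements of real^('i + bool): component
Inl i is the weight v_i of the training point i, component Inr True is v_{n+1}
(the weight of (X_{n+1}, z)), and component Inr False is v_{n+2}
(the weight of (X_{n+1}, y)).
\<close>

definition evalH :: "('x \<Rightarrow> 'h::real_inner) \<Rightarrow> 'h \<Rightarrow> 'x \<Rightarrow> real" where
  "evalH K f x = inner f (K x)"

definition risk :: "(real \<Rightarrow> real \<Rightarrow> real) \<Rightarrow> ('x \<Rightarrow> 'h::real_inner) \<Rightarrow> real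
    \<Rightarrow> ('x \<times> real) pmf \<Rightarrow> 'h \<Rightarrow> real" where
  "risk loss K lam Q f =
     measure_pmf.expectation Q (\<lambda>(x, y'). loss y' (evalH K f x)) + lam * (norm f)^2"

definition mixture :: "real \<Rightarrow> 'a pmf \<Rightarrow> 'a pmf \<Rightarrow> 'a pmf" where
  "mixture t Q Q' = bind_pmf (bernoulli_pmf t) (\<lambda>b. if b then Q' else Q)"

definition has_BIF :: "(('x \<times> real) pmf \<Rightarrow> 'h::real_normed_vector)
    \<Rightarrow> ('x \<times> real) pmf \<Rightarrow> ('x \<times> real) pmf \<Rightarrow> 'h \<Rightarrow> bool" where
  "has_BIF T Q' Q B \<longleftrightarrow>
     ((\<lambda>t. (1 / t) *\<^sub>R (T (mixture t Q Q') - T Q)) \<longlongrightarrow> B) (at_right 0)"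

definition Pemp :: "('i::finite \<Rightarrow> 'x) \<Rightarrow> ('i \<Rightarrow> real) \<Rightarrow> 'x \<Rightarrow> real \<Rightarrow> ('x \<times> real) pmf" where
  "Pemp X Y Xn z' =
     map_pmf (\<lambda>j. case j of None \<Rightarrow> (Xn, z') | Some i \<Rightarrow> (X i, Y i)) (pmf_of_set UNIV)"

definition Rhat :: "(real \<Rightarrow> real \<Rightarrow> real) \<Rightarrow> ('x \<Rightarrow> 'h::real_inner) \<Rightarrow> real
    \<Rightarrow> ('i::finite \<Rightarrow> 'x) \<Rightarrow> ('i \<Rightarrow> real) \<Rightarrow> 'x \<Rightarrow> real \<Rightarrow> real
    \<Rightarrow> real ^ ('i + bool) \<Rightarrow> 'h \<Rightarrow> real" where
  "Rhat loss K lam X Y Xn z y v f =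
     (\<Sum>i\<in>UNIV. v $ Inl i * loss (Y i) (evalH K f (X i))) / (real CARD('i) + 1)
     + v $ Inr True / (real CARD('i) + 1) * loss z (evalH K f Xn)
     + v $ Inr False / (real CARD('i) + 1) * loss y (evalH K f Xn)
     + lam * (norm f)^2"

definition fhat :: "(real \<Rightarrow> real \<Rightarrow> real) \<Rightarrow> ('x \<Rightarrow> 'h::real_inner) \<Rightarrow> real
    \<Rightarrow> ('i::finite \<Rightarrow> 'x) \<Rightarrow> ('i \<Rightarrow> real) \<Rightarrow> 'x \<Rightarrow> real \<Rightarrow> real
    \<Rightarrow> real ^ ('i + bool) \<Rightarrow> 'h" where
  "fhat loss K lam X Y Xn z y v =
     (THE f. \<forall>g. Rhat loss K lam X Y Xn z y v f \<le> Rhat loss K lam X Y Xn z y v g)"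

definition uvec :: "real ^ ('i::finite + bool)" where
  "uvec = (\<chi> j. case j of Inl _ \<Rightarrow> 1 | Inr b \<Rightarrow> (if b then 1 else 0))"

definition wvec :: "real ^ ('i::finite + bool)" where
  "wvec = (\<chi> j. case j of Inl _ \<Rightarrow> 1 | Inr b \<Rightarrow> (if b then 0 else 1))"

text \<open>Second Frechet differential of hat R_lambda(v; .) at f, as an operator on 'h
  (loss2 is the second derivative of the loss in its second argument).\<close>
definition hessR :: "(real \<Rightarrow> real \<Rightarrow> real) \<Rightarrow> ('x \<Rightarrow> 'h::real_inner) \<Rightarrow> real
    \<Rightarrow> ('i::finite \<Rightarrow> 'x) \<Rightarrow> ('i \<Rightarrow> real) \<Rightarrow> 'x \<Rightarrow> real \<Rightarrow> real
    \<Rightarrow> real ^ ('i + bool) \<Rightarrow> 'h \<Rightarrow> 'h \<Rightarrow> 'h" where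
  "hessR loss2 K lam X Y Xn z y v f h =
     (\<Sum>i\<in>UNIV. (v $ Inl i * loss2 (Y i) (evalH K f (X i)) / (real CARD('i) + 1))
                   *\<^sub>R (inner (K (X i)) h *\<^sub>R K (X i)))
     + (v $ Inr True * loss2 z (evalH K f Xn) / (real CARD('i) + 1)) *\<^sub>R (inner (K Xn) h *\<^sub>R K Xn)
     + (v $ Inr False * loss2 y (evalH K f Xn) / (real CARD('i) + 1)) *\<^sub>R (inner (K Xn) h *\<^sub>R K Xn)
     + (2 * lam) *\<^sub>R h"

definition Aspace :: "('x \<Rightarrow> 'h::real_vector) \<Rightarrow> ('i \<Rightarrow> 'x) \<Rightarrow> 'x \<Rightarrow> 'h set" where
  "Aspace K X Xn = span (insert (K Xn) (range (\<lambda>i. K (X i))))"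

text \<open>[Op]^+ b: the inverse of the restriction of Op to A, applied to b.\<close>
definition restr_inv :: "('h \<Rightarrow> 'h) \<Rightarrow> 'h set \<Rightarrow> 'h \<Rightarrow> 'h" where
  "restr_inv Op A b = (THE g. g \<in> A \<and> Op g = b)"

definition Iinf :: "(real \<Rightarrow> real \<Rightarrow> real) \<Rightarrow> (real \<Rightarrow> real \<Rightarrow> real) \<Rightarrow> (real \<Rightarrow> real \<Rightarrow> real)
    \<Rightarrow> ('x \<Rightarrow> 'h::real_inner) \<Rightarrow> real
    \<Rightarrow> ('i::finite \<Rightarrow> 'x) \<Rightarrow> ('i \<Rightarrow> real) \<Rightarrow> 'x \<Rightarrow> real \<Rightarrow> real \<Rightarrow> real \<Rightarrow> 'h" where
  "Iinf loss loss1 loss2 K lam X Y Xn z y z' =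
     (let fz = fhat loss K lam X Y Xn z y uvec
      in (- loss1 z' (evalH K fz Xn) / (real CARD('i) + 1))
           *\<^sub>R restr_inv (hessR loss2 K lam X Y Xn z y uvec fz) (Aspace K X Xn) (K Xn))"

end

theory Submission
  imports Defs
begin

(* For weights v near u = (1,...,1,1,0) the gradient of the weighted risk R(v, .) is strongly
   monotone and Lipschitz on the Hilbert space (the deviation of v from the nonnegative u is
   absorbed by the regulariser), so it has a unique zero, which is the unique minimiser f(v).
   Subtracting the first-order conditions at v and at u and expanding the derivative of the loss
   to first order gives  H (f(v) - f(u)) + B (v - u) = o(|v - u|),  where H is the Hessian at u
   (coercive, hence invertible, and leaving the span of the feature vectors invariant) and B is
   the linear map v |-> sum_j v_j l'(Y_j, f(u)(X_j)) K_{X_j}. Hence f is Frechet differentiable at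
   u with derivative -H^-1 B. The mixture (1 - t) P^z + t P^y has exactly the weighted risk with
   weights u + t (w - u), so T along this path is f(u + t (w - u)) and the Bouligand influence
   function is the directional derivative -H^-1 B (w - u), i.e. -I(z) + I(y). *)

section \<open>Strongly monotone operators on Hilbert spaces\<close>

lemma gradient_step_contraction:
  fixes Phi :: "'h::real_inner \<Rightarrow> 'h"
  assumes mu: "0 < mu" "mu \<le> L"
    and mono: "\<And>x y. mu * (norm (x - y))^2 \<le> inner (Phi x - Phi y) (x - y)"
    and lip: "\<And>x y. norm (Phi x - Phi y) \<le> L * norm (x - y)"
  shows "norm ((x - (mu / L^2) *\<^sub>R Phi x) - (y - (mu / L^2) *\<^sub>R Phi y))
           \<le> sqrt (1 - mu^2 / L^2) * norm (x - y)"
proof -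
  define eta where "eta = mu / L^2"
  define d where "d = x - y"
  define p where "p = Phi x - Phi y"
  have L: "0 < L" using mu by linarith
  have eta: "0 \<le> eta" using mu L by (simp add: eta_def)
  have q: "0 \<le> 1 - mu^2 / L^2"
    using mu L power_mono[of mu L 2] by (simp add: field_simps)
  have "(norm (d - eta *\<^sub>R p))^2 = (norm d)^2 - 2 * eta * inner p d + eta^2 * (norm p)^2"
    by (simp only: power2_norm_eq_inner)
      (simp add: inner_diff_left inner_diff_right inner_commute[of d p] power2_eq_square algebra_simps)
  also have "\<dots> \<le> (norm d)^2 - 2 * eta * (mu * (norm d)^2) + eta^2 * (L * norm d)^2"
  proof -
    have "2 * eta * (mu * (norm d)^2) \<le> 2 * eta * inner p d"
      using mono[of x y] eta by (intro mult_left_mono) (simp_all add: d_def p_def)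
    moreover have "eta^2 * (norm p)^2 \<le> eta^2 * (L * norm d)^2"
      using lip[of x y] by (intro mult_left_mono power_mono) (simp_all add: d_def p_def)
    ultimately show ?thesis by linarith
  qed
  also have "\<dots> = (sqrt (1 - mu^2 / L^2) * norm d)^2"
    using L q by (simp add: eta_def power_mult_distrib field_simps power2_eq_square)
  finally have "norm (d - eta *\<^sub>R p) \<le> sqrt (1 - mu^2 / L^2) * norm d"
    by (rule power2_le_imp_le) (use q in simp)
  then show ?thesis by (simp add: eta_def d_def p_def algebra_simps)
qed

lemma strongly_monotone_Lipschitz_has_zero:
  fixes Phi :: "'h::{real_inner,complete_space} \<Rightarrow> 'h"
  assumes mu: "0 < mu"
    and mono: "\<And>x y. mu * (norm (x - y))^2 \<le> inner (Phi x - Phi y) (x - y)"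
    and lip: "\<And>x y. norm (Phi x - Phi y) \<le> L * norm (x - y)"
  shows "\<exists>x. Phi x = 0"
proof -
  define L' where "L' = max L mu"
  have lip': "norm (Phi x - Phi y) \<le> L' * norm (x - y)" for x y
    by (rule order_trans[OF lip]) (simp add: L'_def mult_right_mono)
  have L': "0 < L'" "mu \<le> L'" using mu by (auto simp: L'_def)
  have c: "0 \<le> sqrt (1 - mu^2 / L'^2)" "sqrt (1 - mu^2 / L'^2) < 1"
    using mu L' power_mono[of mu L' 2] by (auto simp: field_simps)
  define S where "S x = x - (mu / L'^2) *\<^sub>R Phi x" for x
  have "\<forall>x y. dist (S x) (S y) \<le> sqrt (1 - mu^2 / L'^2) * dist x y"
    using gradient_step_contraction[OF mu(1) L'(2) mono lip'] by (simp add: S_def dist_norm)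
  then obtain x where "S x = x" using ex1_implies_ex[OF banach_fix_type[OF c]] by blast
  then show ?thesis using mu L' by (auto simp: S_def)
qed

lemma strongly_monotone_gradient_strict_min:
  fixes F :: "'h::real_inner \<Rightarrow> real"
  assumes grad: "\<And>f. (F has_derivative (\<lambda>h. inner (G f) h)) (at f)"
    and mono: "\<And>f g. mu * (norm (f - g))^2 \<le> inner (G f - G g) (f - g)" and mu: "0 < mu"
    and zero: "G f = 0" and "g \<noteq> f"
  shows "F f < F g"
proof -
  define d where "d = g - f"
  have "((\<lambda>t. F (f + t *\<^sub>R d)) has_real_derivative inner (G (f + t *\<^sub>R d)) d) (at t)" for t
  proof -
    have "((\<lambda>t. f + t *\<^sub>R d) has_derivative (\<lambda>s. s *\<^sub>R d)) (at t)"
      by (auto intro!: derivative_eq_intros)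
    from has_derivative_compose[OF this grad]
    have "((\<lambda>t. F (f + t *\<^sub>R d)) has_derivative (\<lambda>s. inner (G (f + t *\<^sub>R d)) (s *\<^sub>R d))) (at t)" .
    then show ?thesis
      unfolding has_field_derivative_def by (rule has_derivative_eq_rhs) (simp add: fun_eq_iff)
  qed
  then obtain z where z: "0 < z" "z < 1"
    and mvt: "F (f + 1 *\<^sub>R d) - F (f + 0 *\<^sub>R d) = (1 - 0) * inner (G (f + z *\<^sub>R d)) d"
    using MVT2[of 0 1 "\<lambda>t. F (f + t *\<^sub>R d)" "\<lambda>t. inner (G (f + t *\<^sub>R d)) d"] by auto
  have "mu * (norm (z *\<^sub>R d))^2 \<le> inner (G (f + z *\<^sub>R d) - G f) (z *\<^sub>R d)"
    using mono[of "f + z *\<^sub>R d" f] by simp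
  then have "z * (mu * z * (norm d)^2) \<le> z * inner (G (f + z *\<^sub>R d)) d"
    using z zero by (simp add: power_mult_distrib power2_eq_square ac_simps)
  then have "mu * z * (norm d)^2 \<le> inner (G (f + z *\<^sub>R d)) d"
    using z by simp
  moreover have "0 < mu * z * (norm d)^2"
    using mu z \<open>g \<noteq> f\<close> by (simp add: d_def)
  ultimately show ?thesis using mvt by (simp add: d_def)
qed

lemma convex_deriv_monotone:
  fixes g :: "real \<Rightarrow> real"
  assumes cv: "convex_on UNIV g" and dg: "\<And>u. (g has_real_derivative g' u) (at u)"
  shows "0 \<le> (g' s - g' t) * (s - t)"
proof -
  have "g' s * (t - s) \<le> g t - g s" "g' t * (s - t) \<le> g s - g t"
    by (rule convex_on_imp_above_tangent[OF cv]; simp add: dg)+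
  then show ?thesis by (simp add: algebra_simps)
qed

lemma convex_second_deriv_nonneg:
  fixes g :: "real \<Rightarrow> real"
  assumes cv: "convex_on UNIV g" and dg: "\<And>u. (g has_real_derivative g' u) (at u)"
    and dg': "(g' has_real_derivative g'') (at s)"
  shows "0 \<le> g''"
proof (rule mono_on_imp_deriv_nonneg[OF _ dg'])
  show "mono_on UNIV g'"
  proof (rule mono_onI)
    fix r t :: real assume "r \<le> t"
    with convex_deriv_monotone[OF cv dg, of t r] show "g' r \<le> g' t"
      by (cases "r = t") (auto simp: zero_le_mult_iff)
  qed
qed simp_all

lemma has_real_derivative_remainder_eventually:
  assumes "(g has_real_derivative c) (at a)" and "0 < e" and "(s \<longlongrightarrow> 0) F"
  shows "eventually (\<lambda>x. \<bar>g (a + s x) - g a - c * s x\<bar> \<le> e * \<bar>s x\<bar>) F"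
proof -
  have "eventually (\<lambda>y. \<bar>g y - g a - c * (y - a)\<bar> \<le> e * \<bar>y - a\<bar>) (at a)"
    using assms(1,2) by (auto simp: has_field_derivative_def has_derivative_within_alt2 mult.commute)
  then have "eventually (\<lambda>y. \<bar>g y - g a - c * (y - a)\<bar> \<le> e * \<bar>y - a\<bar>) (nhds a)"
    by (auto simp: eventually_at_filter elim: eventually_mono)
  moreover have "filterlim (\<lambda>x. a + s x) (nhds a) F"
    using tendsto_add[OF tendsto_const assms(3), of a] by simp
  ultimately show ?thesis by (auto simp: filterlim_iff)
qed

lemma has_derivative_imp_difference_quotient_at_right:
  assumes "(f has_derivative f') (at x)"
  shows "((\<lambda>t. (1 / t) *\<^sub>R (f (x + t *\<^sub>R d) - f x)) \<longlongrightarrow> f' d) (at_right 0)"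
proof -
  have lin: "linear f'" using assms by (rule has_derivative_linear)
  have line: "((\<lambda>t. x + t *\<^sub>R d) has_derivative (\<lambda>t. t *\<^sub>R d)) (at 0 within {0<..})"
    by (auto intro!: derivative_eq_intros)
  have "((\<lambda>t. f (x + t *\<^sub>R d)) has_derivative (\<lambda>t. f' (t *\<^sub>R d))) (at 0 within {0<..})"
    using has_derivative_compose[OF line, of f f'] assms by simp
  then have "((\<lambda>t. f (x + t *\<^sub>R d)) has_derivative (\<lambda>t. t *\<^sub>R f' d)) (at 0 within {0<..})"
    by (simp add: linear_scale[OF lin])
  then have "((\<lambda>t. (1 / norm t) *\<^sub>R (f (x + t *\<^sub>R d) - (f x + t *\<^sub>R f' d))) \<longlongrightarrow> 0) (at_right 0)"
    by (simp add: has_derivative_within)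
  then have "((\<lambda>t. (1 / t) *\<^sub>R (f (x + t *\<^sub>R d) - f x) - f' d) \<longlongrightarrow> 0) (at_right 0)"
    by (rule Lim_transform_eventually)
      (auto intro: eventually_mono[OF eventually_at_right_less] simp: algebra_simps)
  then show ?thesis by (simp add: LIM_zero_iff)
qed

lemma expectation_mixture:
  fixes phi :: "'a \<Rightarrow> real"
  assumes "finite (set_pmf Q)" "finite (set_pmf Q')" and t: "0 \<le> t" "t \<le> 1"
  shows "measure_pmf.expectation (mixture t Q Q') phi
       = (1 - t) * measure_pmf.expectation Q phi + t * measure_pmf.expectation Q' phi"
proof -
  define A where "A = set_pmf Q \<union> set_pmf Q'"
  have A: "finite A" using assms by (simp add: A_def)
  have "set_pmf (mixture t Q Q') \<subseteq> A"
    unfolding mixture_def A_def by (auto split: if_splits)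
  then have "measure_pmf.expectation (mixture t Q Q') phi = (\<Sum>a\<in>A. phi a * pmf (mixture t Q Q') a)"
    by (intro integral_measure_pmf_real[OF A]) auto
  also have "\<dots> = (1 - t) * (\<Sum>a\<in>A. phi a * pmf Q a) + t * (\<Sum>a\<in>A. phi a * pmf Q' a)"
    using t by (simp add: mixture_def pmf_bind sum_distrib_left sum.distrib[symmetric] algebra_simps)
  also have "(\<Sum>a\<in>A. phi a * pmf Q a) = measure_pmf.expectation Q phi"
    by (rule integral_measure_pmf_real[OF A, symmetric]) (auto simp: A_def)
  also have "(\<Sum>a\<in>A. phi a * pmf Q' a) = measure_pmf.expectation Q' phi"
    by (rule integral_measure_pmf_real[OF A, symmetric]) (auto simp: A_def)
  finally show ?thesis .
qed

lemma mixture_0 [simp]: "mixture 0 Q Q' = Q"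
proof -
  have "pmf (bernoulli_pmf 0) b = pmf (return_pmf False) b" for b
    by (cases b) simp_all
  then have "bernoulli_pmf 0 = return_pmf False" by (rule pmf_eqI)
  then show ?thesis by (simp add: mixture_def bind_return_pmf)
qed

lemma sum_UNIV_option: "(\<Sum>x\<in>UNIV. h x) = h None + (\<Sum>i\<in>UNIV. h (Some i))"
  for h :: "'i::finite option \<Rightarrow> 'a::comm_monoid_add"
  by (simp add: UNIV_option_conv sum.reindex)

lemma set_pmf_Pemp: "set_pmf (Pemp X Y Xn c) = insert (Xn, c) (range (\<lambda>i. (X i, Y i)))"
  by (simp add: Pemp_def UNIV_option_conv image_image)

lemma expectation_Pemp:
  fixes X :: "'i::finite \<Rightarrow> 'x" and phi :: "'x \<times> real \<Rightarrow> real"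
  shows "measure_pmf.expectation (Pemp X Y Xn c) phi
     = ((\<Sum>i\<in>UNIV. phi (X i, Y i)) + phi (Xn, c)) / (real CARD('i) + 1)"
proof -
  have "measure_pmf.expectation (Pemp X Y Xn c) phi
      = (\<Sum>j\<in>UNIV. phi (case j of None \<Rightarrow> (Xn, c) | Some i \<Rightarrow> (X i, Y i))) / card (UNIV :: 'i option set)"
    unfolding Pemp_def by (simp add: integral_pmf_of_set)
  then show ?thesis by (simp add: sum_UNIV_option add.commute)
qed

section \<open>Weighted regularised risk\<close>

locale weighted_risk =
  fixes l l1 l2 :: "'j::finite \<Rightarrow> real \<Rightarrow> real"
    and k :: "'j \<Rightarrow> 'h::{real_inner,complete_space}"
    and lam beta :: real and u0 :: "real^'j"
  assumes lam_pos: "0 < lam" and beta_pos: "0 < beta"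
    and convex: "\<And>j. convex_on UNIV (l j)"
    and l_deriv: "\<And>j u. (l j has_real_derivative l1 j u) (at u)"
    and l1_deriv: "\<And>j u. (l1 j has_real_derivative l2 j u) (at u)"
    and l1_Lipschitz: "\<And>j u u'. \<bar>l1 j u - l1 j u'\<bar> \<le> beta * \<bar>u - u'\<bar>"
    and u0_nonneg: "\<And>j. 0 \<le> u0 $ j"
begin

definition R :: "real^'j \<Rightarrow> 'h \<Rightarrow> real" where
  "R v f = (\<Sum>j\<in>UNIV. v $ j * l j (inner f (k j))) + lam * (norm f)^2"

definition data_grad :: "'h \<Rightarrow> real^'j \<Rightarrow> 'h" where
  "data_grad f v = (\<Sum>j\<in>UNIV. (v $ j * l1 j (inner f (k j))) *\<^sub>R k j)"

definition grad :: "real^'j \<Rightarrow> 'h \<Rightarrow> 'h" where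
  "grad v f = data_grad f v + (2 * lam) *\<^sub>R f"

lemma has_derivative_R: "(R v has_derivative (\<lambda>h. inner (grad v f) h)) (at f)"
proof -
  have "((\<lambda>f. l j (inner f (k j))) has_derivative (\<lambda>h. l1 j (inner f (k j)) * inner h (k j))) (at f)" for j
  proof -
    have "((\<lambda>f. inner f (k j)) has_derivative (\<lambda>h. inner h (k j))) (at f)"
      by (auto intro!: derivative_eq_intros)
    moreover have "(l j has_derivative (*) (l1 j (inner f (k j)))) (at (inner f (k j)))"
      using l_deriv by (simp add: has_field_derivative_def)
    ultimately show ?thesis by (rule has_derivative_compose)
  qed
  then have "(R v has_derivative (\<lambda>h. (\<Sum>j\<in>UNIV. v $ j * (l1 j (inner f (k j)) * inner h (k j)))
      + lam * (inner f h + inner h f))) (at f)"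
    unfolding R_def power2_norm_eq_inner
    by (intro has_derivative_add has_derivative_sum has_derivative_mult_right
        has_derivative_inner has_derivative_ident)
  then show ?thesis
    by (simp add: grad_def data_grad_def inner_add_left inner_sum_left inner_sum_right inner_commute
        algebra_simps)
qed

lemma linear_data_grad: "linear (data_grad f)"
  by (rule linearI)
    (simp_all add: data_grad_def algebra_simps scaleR_add_left sum.distrib scaleR_sum_right)

lemma data_grad_diff:
  "data_grad f v - data_grad g v
     = (\<Sum>j\<in>UNIV. (v $ j * (l1 j (inner f (k j)) - l1 j (inner g (k j)))) *\<^sub>R k j)"
  by (simp only: data_grad_def sum_subtractf[symmetric] scaleR_diff_left[symmetric]
      right_diff_distrib[symmetric])

lemma data_grad_Lipschitz:
  "norm (data_grad f v - data_grad g v)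
     \<le> (\<Sum>j\<in>UNIV. \<bar>v $ j\<bar> * beta * (norm (k j))^2) * norm (f - g)"
proof -
  have "\<bar>v $ j * (l1 j (inner f (k j)) - l1 j (inner g (k j)))\<bar> * norm (k j)
      \<le> \<bar>v $ j\<bar> * beta * (norm (k j))^2 * norm (f - g)" for j
  proof -
    have "\<bar>l1 j (inner f (k j)) - l1 j (inner g (k j))\<bar> \<le> beta * \<bar>inner (f - g) (k j)\<bar>"
      using l1_Lipschitz by (simp add: inner_diff_left)
    also have "\<dots> \<le> beta * (norm (f - g) * norm (k j))"
      using beta_pos by (intro mult_left_mono Cauchy_Schwarz_ineq2) simp
    finally have "\<bar>v $ j\<bar> * \<bar>l1 j (inner f (k j)) - l1 j (inner g (k j))\<bar> * norm (k j)
        \<le> \<bar>v $ j\<bar> * (beta * (norm (f - g) * norm (k j))) * norm (k j)"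
      by (intro mult_right_mono mult_left_mono) simp_all
    then show ?thesis by (simp add: abs_mult power2_eq_square ac_simps)
  qed
  then have "(\<Sum>j\<in>UNIV. norm ((v $ j * (l1 j (inner f (k j)) - l1 j (inner g (k j)))) *\<^sub>R k j))
      \<le> (\<Sum>j\<in>UNIV. \<bar>v $ j\<bar> * beta * (norm (k j))^2 * norm (f - g))"
    by (intro sum_mono) simp
  then show ?thesis
    unfolding data_grad_diff sum_distrib_right[symmetric] by (rule order_trans[OF norm_sum])
qed

text \<open>The radius is chosen so that the monotonicity lost to the deviation \<open>v - u0\<close> of the
  weights, which may make them negative, is absorbed by the regulariser.\<close>

definition rad :: real where
  "rad = lam / (beta * ((\<Sum>j\<in>UNIV. (norm (k j))^2) + 1))"

lemma rad_pos: "0 < rad"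
  using lam_pos beta_pos by (simp add: rad_def add_nonneg_pos sum_nonneg)

lemma weighted_monotone:
  assumes "v \<in> ball u0 rad"
  shows "- (rad * beta * (s - t)^2) \<le> v $ j * (l1 j s - l1 j t) * (s - t)"
proof -
  have "0 \<le> u0 $ j * ((l1 j s - l1 j t) * (s - t))"
    using u0_nonneg convex_deriv_monotone[OF convex l_deriv] by simp
  moreover have "\<bar>(v $ j - u0 $ j) * ((l1 j s - l1 j t) * (s - t))\<bar> \<le> rad * (beta * \<bar>s - t\<bar> * \<bar>s - t\<bar>)"
  proof -
    have "\<bar>v $ j - u0 $ j\<bar> \<le> rad"
      using assms component_le_norm_cart[of "v - u0" j] by (simp add: dist_norm norm_minus_commute)
    then show ?thesis
      unfolding abs_mult using l1_Lipschitz[of j s t]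
      by (intro mult_mono) (auto intro: mult_right_mono)
  qed
  ultimately show ?thesis
    by (simp add: power2_eq_square algebra_simps abs_le_iff)
qed

lemma grad_strongly_monotone:
  assumes "v \<in> ball u0 rad"
  shows "lam * (norm (f - g))^2 \<le> inner (grad v f - grad v g) (f - g)"
proof -
  define d where "d = f - g"
  define S where "S = (\<Sum>j\<in>UNIV. (norm (k j))^2)"
  have each: "- (rad * beta * ((norm (k j))^2 * (norm d)^2))
      \<le> v $ j * (l1 j (inner f (k j)) - l1 j (inner g (k j))) * inner (k j) d" for j
  proof -
    have "(inner (k j) d)^2 \<le> (norm (k j))^2 * (norm d)^2"
      using Cauchy_Schwarz_ineq[of "k j" d] by (simp add: power2_norm_eq_inner)
    then have "rad * beta * (inner (k j) d)^2 \<le> rad * beta * ((norm (k j))^2 * (norm d)^2)"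
      using rad_pos beta_pos by (intro mult_left_mono) auto
    moreover have "inner (k j) d = inner f (k j) - inner g (k j)"
      by (simp add: d_def inner_diff_right inner_commute)
    ultimately show ?thesis
      using weighted_monotone[OF assms, where j = j and s = "inner f (k j)" and t = "inner g (k j)"] by simp
  qed
  have "grad v f - grad v g = (data_grad f v - data_grad g v) + (2 * lam) *\<^sub>R d"
    by (simp add: grad_def d_def scaleR_diff_right)
  then have "inner (grad v f - grad v g) d
      = (\<Sum>j\<in>UNIV. v $ j * (l1 j (inner f (k j)) - l1 j (inner g (k j))) * inner (k j) d)
        + 2 * lam * (norm d)^2"
    by (simp add: inner_add_left data_grad_diff inner_sum_left power2_norm_eq_inner)
  moreover have "- (rad * beta * (S * (norm d)^2))
      \<le> (\<Sum>j\<in>UNIV. v $ j * (l1 j (inner f (k j)) - l1 j (inner g (k j))) * inner (k j) d)"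
    using sum_mono[of UNIV, OF each] by (simp add: S_def sum_negf sum_distrib_left sum_distrib_right)
  moreover have "rad * beta * (S * (norm d)^2) \<le> lam * (norm d)^2"
  proof -
    have S: "0 \<le> S" by (simp add: S_def sum_nonneg)
    have "S + 1 \<noteq> 0" using S by simp
    then have "rad * (beta * (S + 1)) = lam" using beta_pos by (simp add: rad_def S_def)
    have "rad * beta * S \<le> rad * beta * S + rad * beta"
      using rad_pos beta_pos by simp
    also have "\<dots> = lam" using \<open>rad * (beta * (S + 1)) = lam\<close> by (simp add: algebra_simps)
    finally show ?thesis by (simp add: mult.assoc[symmetric] mult_right_mono)
  qed
  ultimately show ?thesis by (simp add: d_def)
qed

lemma grad_has_zero:
  assumes "v \<in> ball u0 rad"
  shows "\<exists>f. grad v f = 0"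
proof (rule strongly_monotone_Lipschitz_has_zero[OF lam_pos grad_strongly_monotone[OF assms]])
  fix f g
  have "grad v f - grad v g = (data_grad f v - data_grad g v) + (2 * lam) *\<^sub>R (f - g)"
    by (simp add: grad_def scaleR_diff_right)
  then have "norm (grad v f - grad v g) \<le> norm (data_grad f v - data_grad g v) + 2 * lam * norm (f - g)"
    using norm_triangle_ineq[of "data_grad f v - data_grad g v" "(2 * lam) *\<^sub>R (f - g)"] lam_pos
    by simp
  then show "norm (grad v f - grad v g)
      \<le> ((\<Sum>j\<in>UNIV. \<bar>v $ j\<bar> * beta * (norm (k j))^2) + 2 * lam) * norm (f - g)"
    using data_grad_Lipschitz[of f v g] unfolding distrib_right by linarith
qed

lemma R_strict_min:
  assumes "v \<in> ball u0 rad" and "grad v f = 0" and "g \<noteq> f"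
  shows "R v f < R v g"
  by (rule strongly_monotone_gradient_strict_min[OF has_derivative_R
        grad_strongly_monotone[OF assms(1)] lam_pos assms(2,3)])

definition minimiser :: "real^'j \<Rightarrow> 'h" where
  "minimiser v = (THE f. \<forall>g. R v f \<le> R v g)"

lemma minimiser_eqI:
  assumes "v \<in> ball u0 rad" and "grad v f = 0"
  shows "minimiser v = f"
  unfolding minimiser_def
proof (rule the_equality)
  show "\<forall>g. R v f \<le> R v g"
    using R_strict_min[OF assms] by (metis order_le_less)
  show "f' = f" if "\<forall>g. R v f' \<le> R v g" for f'
    using that R_strict_min[OF assms, of f'] by (metis not_le)
qed

lemma grad_minimiser:
  assumes "v \<in> ball u0 rad"
  shows "grad v (minimiser v) = 0"
  using grad_has_zero[OF assms] minimiser_eqI[OF assms] by auto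

lemma minimiser_le:
  assumes "v \<in> ball u0 rad"
  shows "R v (minimiser v) \<le> R v g"
  using R_strict_min[OF assms grad_minimiser[OF assms], of g] by (cases "g = minimiser v") auto

lemma minimiser_unique:
  assumes "v \<in> ball u0 rad" and "\<And>g. R v f \<le> R v g"
  shows "minimiser v = f"
  using R_strict_min[OF assms(1) grad_minimiser[OF assms(1)], of f] assms(2)[of "minimiser v"]
  by (metis not_le)

definition f0 :: 'h where
  "f0 = minimiser u0"

lemma grad_f0: "grad u0 f0 = 0"
  unfolding f0_def by (rule grad_minimiser) (simp add: rad_pos)

lemma grad_at_f0: "grad v f0 = data_grad f0 (v - u0)"
proof -
  have "grad v f0 = grad v f0 - grad u0 f0" by (simp add: grad_f0)
  also have "\<dots> = data_grad f0 (v - u0)"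
    by (simp add: grad_def linear_diff[OF linear_data_grad])
  finally show ?thesis .
qed

definition hess :: "'h \<Rightarrow> 'h" where
  "hess h = (\<Sum>j\<in>UNIV. (u0 $ j * l2 j (inner f0 (k j))) *\<^sub>R (inner (k j) h *\<^sub>R k j)) + (2 * lam) *\<^sub>R h"

lemma linear_hess: "linear hess"
proof (rule linearI)
  show "hess (g + h) = hess g + hess h" for g h
    by (simp add: hess_def inner_add_right scaleR_add_left scaleR_add_right sum.distrib)
  show "hess (r *\<^sub>R h) = r *\<^sub>R hess h" for r h
    by (simp add: hess_def scaleR_right.sum scaleR_add_right ac_simps)
qed

lemma hess_coercive: "2 * lam * (norm h)^2 \<le> inner (hess h) h"
proof -
  have c: "0 \<le> u0 $ j * l2 j (inner f0 (k j))" for j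
    using u0_nonneg convex_second_deriv_nonneg[OF convex l_deriv l1_deriv] by simp
  have "0 \<le> (\<Sum>j\<in>UNIV. u0 $ j * l2 j (inner f0 (k j)) * (inner (k j) h * inner (k j) h))"
    by (intro sum_nonneg mult_nonneg_nonneg[OF c zero_le_square])
  then show ?thesis
    by (simp add: hess_def inner_add_left inner_sum_left power2_norm_eq_inner mult.assoc)
qed

lemma norm_hess_ge: "2 * lam * norm h \<le> norm (hess h)"
proof (cases "h = 0")
  case False
  have "2 * lam * norm h * norm h \<le> inner (hess h) h"
    using hess_coercive by (simp add: power2_eq_square mult.assoc)
  also have "\<dots> \<le> norm (hess h) * norm h" by (rule norm_cauchy_schwarz)
  finally show ?thesis using False by simp
qed simp

lemma norm_hess_le:
  "norm (hess h) \<le> ((\<Sum>j\<in>UNIV. \<bar>u0 $ j * l2 j (inner f0 (k j))\<bar> * (norm (k j))^2) + 2 * lam) * norm h"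
proof -
  have "norm ((u0 $ j * l2 j (inner f0 (k j))) *\<^sub>R (inner (k j) h *\<^sub>R k j))
      \<le> \<bar>u0 $ j * l2 j (inner f0 (k j))\<bar> * (norm (k j))^2 * norm h" for j
  proof -
    have "\<bar>u0 $ j * l2 j (inner f0 (k j))\<bar> * \<bar>inner (k j) h\<bar> * norm (k j)
        \<le> \<bar>u0 $ j * l2 j (inner f0 (k j))\<bar> * (norm (k j) * norm h) * norm (k j)"
      using Cauchy_Schwarz_ineq2[of "k j" h] by (intro mult_right_mono mult_left_mono) auto
    then show ?thesis by (simp add: abs_mult power2_eq_square ac_simps)
  qed
  then have "norm (\<Sum>j\<in>UNIV. (u0 $ j * l2 j (inner f0 (k j))) *\<^sub>R (inner (k j) h *\<^sub>R k j))
      \<le> (\<Sum>j\<in>UNIV. \<bar>u0 $ j * l2 j (inner f0 (k j))\<bar> * (norm (k j))^2) * norm h"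
    unfolding sum_distrib_right by (intro order_trans[OF norm_sum sum_mono])
  then show ?thesis
    using norm_triangle_ineq[of _ "(2 * lam) *\<^sub>R h"] lam_pos
    unfolding hess_def distrib_right by (smt (verit) norm_scaleR abs_of_pos mult_pos_pos)
qed

lemma bij_hess: "bij hess"
proof (rule bijI)
  show "inj hess"
  proof (rule injI)
    fix g h assume "hess g = hess h"
    then have "hess (g - h) = 0" by (simp add: linear_diff[OF linear_hess])
    then have "norm (g - h) \<le> 0" using norm_hess_ge[of "g - h"] lam_pos by (simp add: mult_le_0_iff)
    then show "g = h" by simp
  qed
  have "\<exists>h. hess h = b" for b
  proof -
    have "\<exists>h. hess h - b = 0"
    proof (rule strongly_monotone_Lipschitz_has_zero)
      show "0 < 2 * lam" using lam_pos by simp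
      show "2 * lam * (norm (g - h))^2 \<le> inner ((hess g - b) - (hess h - b)) (g - h)" for g h
        using hess_coercive[of "g - h"] by (simp add: linear_diff[OF linear_hess])
      show "norm ((hess g - b) - (hess h - b))
          \<le> ((\<Sum>j\<in>UNIV. \<bar>u0 $ j * l2 j (inner f0 (k j))\<bar> * (norm (k j))^2) + 2 * lam) * norm (g - h)"
        for g h
        using norm_hess_le[of "g - h"] by (simp add: linear_diff[OF linear_hess])
    qed
    then show ?thesis by simp
  qed
  then show "surj hess" by (metis surj_def)
qed

definition hess_inv :: "'h \<Rightarrow> 'h" where
  "hess_inv = inv hess"

lemma hess_hess_inv [simp]: "hess (hess_inv b) = b"
  using bij_hess by (simp add: hess_inv_def bij_is_surj surj_f_inv_f)

lemma hess_inv_hess [simp]: "hess_inv (hess h) = h"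
  using bij_hess by (simp add: hess_inv_def bij_is_inj)

lemma linear_hess_inv: "linear hess_inv"
proof (rule linearI)
  show "hess_inv (a + b) = hess_inv a + hess_inv b" for a b
    by (metis hess_hess_inv hess_inv_hess linear_add[OF linear_hess])
  show "hess_inv (r *\<^sub>R b) = r *\<^sub>R hess_inv b" for r b
    by (metis hess_hess_inv hess_inv_hess linear_scale[OF linear_hess])
qed

lemma hess_inv_in_span:
  assumes "b \<in> span (range k)"
  shows "hess_inv b \<in> span (range k)"
proof -
  define h where "h = hess_inv b"
  have "(2 * lam) *\<^sub>R h = b - (\<Sum>j\<in>UNIV. (u0 $ j * l2 j (inner f0 (k j))) *\<^sub>R (inner (k j) h *\<^sub>R k j))"
    using hess_hess_inv[of b] by (simp add: hess_def h_def algebra_simps)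
  also have "\<dots> \<in> span (range k)"
    using assms by (intro span_diff span_sum span_scale) (auto intro: span_base)
  finally have "(1 / (2 * lam)) *\<^sub>R ((2 * lam) *\<^sub>R h) \<in> span (range k)"
    by (rule span_scale)
  then show ?thesis using lam_pos by (simp add: h_def)
qed

lemma restr_inv_hess:
  assumes "b \<in> span (range k)"
  shows "restr_inv hess (span (range k)) b = hess_inv b"
  unfolding restr_inv_def
proof (rule the_equality)
  show "hess_inv b \<in> span (range k) \<and> hess (hess_inv b) = b"
    using hess_inv_in_span[OF assms] by simp
  show "h = hess_inv b" if "h \<in> span (range k) \<and> hess h = b" for h
    using that by auto
qed

definition D :: "real^'j \<Rightarrow> 'h" where
  "D dv = - hess_inv (data_grad f0 dv)"

lemma bounded_linear_D: "bounded_linear D"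
proof -
  have "linear D"
    by (rule linearI) (simp_all add: D_def linear_add[OF linear_data_grad] linear_scale[OF linear_data_grad]
        linear_add[OF linear_hess_inv] linear_scale[OF linear_hess_inv])
  then show ?thesis by (simp add: linear_conv_bounded_linear)
qed

lemma hess_D: "hess (D dv) = - data_grad f0 dv"
  by (simp add: D_def linear_neg[OF linear_hess])

lemma minimiser_Lipschitz_at_u0:
  obtains C where "0 \<le> C" and "\<And>v. v \<in> ball u0 rad \<Longrightarrow> norm (minimiser v - f0) \<le> C * norm (v - u0)"
proof -
  obtain B where B: "0 < B" "\<And>x. norm (data_grad f0 x) \<le> B * norm x"
    using linear_bounded_pos[OF linear_data_grad] by blast
  have bound: "norm (minimiser v - f0) \<le> B / lam * norm (v - u0)" if v: "v \<in> ball u0 rad" for v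
  proof (cases "minimiser v = f0")
    case False
    define e where "e = minimiser v - f0"
    have "lam * (norm e)^2 \<le> inner (grad v (minimiser v) - grad v f0) e"
      unfolding e_def by (rule grad_strongly_monotone[OF v])
    also have "\<dots> = - inner (data_grad f0 (v - u0)) e"
      by (simp add: grad_minimiser[OF v] grad_at_f0)
    also have "\<dots> \<le> norm (data_grad f0 (v - u0)) * norm e"
      using norm_cauchy_schwarz[of "- data_grad f0 (v - u0)" e] by simp
    also have "\<dots> \<le> B * norm (v - u0) * norm e"
      using B(2) by (intro mult_right_mono) auto
    finally have "lam * norm e * norm e \<le> B * norm (v - u0) * norm e"
      by (simp add: power2_eq_square mult.assoc)
    then have "lam * norm e \<le> B * norm (v - u0)"
      using False by (simp add: e_def)
    then show ?thesis using lam_pos by (simp add: e_def field_simps)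
  qed (use B lam_pos in simp)
  have "0 \<le> B / lam" using B lam_pos by simp
  then show ?thesis using bound by (rule that)
qed

definition delta :: "real^'j \<Rightarrow> 'j \<Rightarrow> real" where
  "delta v j = inner (minimiser v - f0) (k j)"

definition taylor_rem :: "real^'j \<Rightarrow> 'j \<Rightarrow> real" where
  "taylor_rem v j =
     (let a = inner f0 (k j)
      in - u0 $ j * (l1 j (a + delta v j) - l1 j a - l2 j a * delta v j)
         - (v - u0) $ j * (l1 j (a + delta v j) - l1 j a))"

lemma hess_minimiser_diff:
  assumes v: "v \<in> ball u0 rad"
  shows "hess (minimiser v - f0) + data_grad f0 (v - u0) = (\<Sum>j\<in>UNIV. taylor_rem v j *\<^sub>R k j)"
proof -
  define e where "e = minimiser v - f0"
  have "grad v (f0 + e) - grad u0 f0 = 0"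
    using grad_minimiser[OF v] grad_f0 by (simp add: e_def)
  then have "hess e + data_grad f0 (v - u0)
      = hess e + data_grad f0 (v - u0) - (grad v (f0 + e) - grad u0 f0)"
    by simp
  also have "\<dots> = (\<Sum>j\<in>UNIV. (u0 $ j * l2 j (inner f0 (k j)) * inner (k j) e) *\<^sub>R k j)
       + (\<Sum>j\<in>UNIV. ((v - u0) $ j * l1 j (inner f0 (k j))) *\<^sub>R k j)
       - (\<Sum>j\<in>UNIV. (v $ j * l1 j (inner (f0 + e) (k j))) *\<^sub>R k j)
       + (\<Sum>j\<in>UNIV. (u0 $ j * l1 j (inner f0 (k j))) *\<^sub>R k j)"
    by (simp add: hess_def grad_def data_grad_def algebra_simps)
  also have "\<dots> = (\<Sum>j\<in>UNIV. (u0 $ j * l2 j (inner f0 (k j)) * inner (k j) e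
       + (v - u0) $ j * l1 j (inner f0 (k j)) - v $ j * l1 j (inner (f0 + e) (k j))
       + u0 $ j * l1 j (inner f0 (k j))) *\<^sub>R k j)"
    by (simp only: scaleR_add_left scaleR_diff_left sum.distrib sum_subtractf)
  also have "\<dots> = (\<Sum>j\<in>UNIV. taylor_rem v j *\<^sub>R k j)"
    by (rule sum.cong)
      (simp_all add: taylor_rem_def delta_def Let_def e_def inner_add_left inner_commute[of "k _"]
        algebra_simps)
  finally show ?thesis by (simp add: e_def)
qed

lemma eventually_in_ball_at_u0: "eventually (\<lambda>v. v \<in> ball u0 rad) (at u0)"
  by (rule eventually_at_in_open') (simp_all add: rad_pos)

lemma delta_bound:
  obtains c where "0 \<le> c" and "eventually (\<lambda>v. \<bar>delta v j\<bar> \<le> c * norm (v - u0)) (at u0)"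
proof -
  obtain C where C: "0 \<le> C" "\<And>v. v \<in> ball u0 rad \<Longrightarrow> norm (minimiser v - f0) \<le> C * norm (v - u0)"
    using minimiser_Lipschitz_at_u0 by blast
  have "eventually (\<lambda>v. \<bar>delta v j\<bar> \<le> C * norm (k j) * norm (v - u0)) (at u0)"
    using eventually_in_ball_at_u0
  proof (rule eventually_mono)
    fix v assume v: "v \<in> ball u0 rad"
    have "\<bar>delta v j\<bar> \<le> norm (minimiser v - f0) * norm (k j)"
      unfolding delta_def by (rule Cauchy_Schwarz_ineq2)
    also have "\<dots> \<le> C * norm (v - u0) * norm (k j)"
      using C(2)[OF v] by (intro mult_right_mono) auto
    finally show "\<bar>delta v j\<bar> \<le> C * norm (k j) * norm (v - u0)" by (simp add: ac_simps)
  qed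
  moreover have "0 \<le> C * norm (k j)" using C(1) by simp
  ultimately show ?thesis using that by blast
qed

text \<open>The two parts of \<open>taylor_rem\<close> are \<open>o(norm (v - u0))\<close> for different reasons: the first is the
  Taylor remainder of \<open>l1 j\<close> at an increment \<open>delta v j = O(norm (v - u0))\<close>, the second is a
  product of two factors of that order.\<close>

lemma l1_taylor_small:
  assumes e: "0 < e"
  shows "eventually (\<lambda>v. \<bar>l1 j (inner f0 (k j) + delta v j) - l1 j (inner f0 (k j))
           - l2 j (inner f0 (k j)) * delta v j\<bar> \<le> e * norm (v - u0)) (at u0)"
proof -
  obtain c where c: "0 \<le> c" and bound: "eventually (\<lambda>v. \<bar>delta v j\<bar> \<le> c * norm (v - u0)) (at u0)"
    by (rule delta_bound)
  have "((\<lambda>v. c * norm (v - u0)) \<longlongrightarrow> 0) (at u0)"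
    by (rule tendsto_mult_right_zero[OF tendsto_norm_zero[OF LIM_zero[OF tendsto_ident_at]]])
  then have delta_0: "((\<lambda>v. delta v j) \<longlongrightarrow> 0) (at u0)"
    by (rule Lim_null_comparison[rotated]) (use bound in simp)
  have e': "0 < e / (c + 1)" using e c by simp
  from has_real_derivative_remainder_eventually[OF l1_deriv[of j "inner f0 (k j)"] e' delta_0] bound
  show ?thesis
  proof eventually_elim
    case (elim v)
    have "e / (c + 1) * \<bar>delta v j\<bar> \<le> e / (c + 1) * (c * norm (v - u0))"
      using elim(2) e' by (intro mult_left_mono) auto
    also have "\<dots> = e * norm (v - u0) * (c / (c + 1))" by (simp add: ac_simps)
    also have "\<dots> \<le> e * norm (v - u0)" using e c by (intro mult_left_le) auto
    finally show ?case using elim(1) by simp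
  qed
qed

lemma l1_increment_small:
  assumes e: "0 < e"
  shows "eventually (\<lambda>v. \<bar>(v - u0) $ j\<bar> * \<bar>l1 j (inner f0 (k j) + delta v j) - l1 j (inner f0 (k j))\<bar>
           \<le> e * norm (v - u0)) (at u0)"
proof -
  obtain c where c: "0 \<le> c" and bound: "eventually (\<lambda>v. \<bar>delta v j\<bar> \<le> c * norm (v - u0)) (at u0)"
    by (rule delta_bound)
  have "((\<lambda>v. beta * c * norm (v - u0)) \<longlongrightarrow> 0) (at u0)"
    by (rule tendsto_mult_right_zero[OF tendsto_norm_zero[OF LIM_zero[OF tendsto_ident_at]]])
  from bound order_tendstoD(2)[OF this e] show ?thesis
  proof eventually_elim
    case (elim v)
    have "\<bar>l1 j (inner f0 (k j) + delta v j) - l1 j (inner f0 (k j))\<bar> \<le> beta * \<bar>delta v j\<bar>"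
      using l1_Lipschitz[of j "inner f0 (k j) + delta v j" "inner f0 (k j)"] by simp
    also have "\<dots> \<le> beta * (c * norm (v - u0))"
      using elim(1) beta_pos by (intro mult_left_mono) auto
    finally have "\<bar>(v - u0) $ j\<bar> * \<bar>l1 j (inner f0 (k j) + delta v j) - l1 j (inner f0 (k j))\<bar>
        \<le> norm (v - u0) * (beta * (c * norm (v - u0)))"
      using component_le_norm_cart[of "v - u0" j] by (intro mult_mono) auto
    also have "\<dots> = (beta * c * norm (v - u0)) * norm (v - u0)" by (simp add: ac_simps)
    also have "\<dots> \<le> e * norm (v - u0)" using elim(2) by (intro mult_right_mono) auto
    finally show ?case .
  qed
qed

lemma taylor_rem_small:
  assumes e: "0 < e"
  shows "eventually (\<lambda>v. \<bar>taylor_rem v j\<bar> \<le> e * norm (v - u0)) (at u0)"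
proof -
  have e1: "0 < e / (2 * (u0 $ j + 1))" and e2: "0 < e / 2" using e u0_nonneg[of j] by simp_all
  from l1_taylor_small[OF e1, of j] l1_increment_small[OF e2, of j] show ?thesis
  proof eventually_elim
    case (elim v)
    define r where "r = l1 j (inner f0 (k j) + delta v j) - l1 j (inner f0 (k j))
      - l2 j (inner f0 (k j)) * delta v j"
    define q where "q = l1 j (inner f0 (k j) + delta v j) - l1 j (inner f0 (k j))"
    have "\<bar>taylor_rem v j\<bar> \<le> u0 $ j * \<bar>r\<bar> + \<bar>(v - u0) $ j\<bar> * \<bar>q\<bar>"
      using abs_triangle_ineq4[of "- (u0 $ j * r)" "(v - u0) $ j * q"] u0_nonneg[of j]
      by (simp add: taylor_rem_def Let_def r_def q_def abs_mult)
    moreover have "u0 $ j * \<bar>r\<bar> \<le> u0 $ j * (e / (2 * (u0 $ j + 1)) * norm (v - u0))"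
      using elim(1) u0_nonneg[of j] by (intro mult_left_mono) (simp_all add: r_def)
    moreover have "\<dots> \<le> e / 2 * norm (v - u0)"
      using e u0_nonneg[of j] by (simp add: field_simps mult_right_mono)
    moreover have "e / 2 * norm (v - u0) + e / 2 * norm (v - u0) = e * norm (v - u0)" by simp
    ultimately show ?case using elim(2) unfolding q_def by linarith
  qed
qed

theorem has_derivative_minimiser: "(minimiser has_derivative D) (at u0)"
  unfolding has_derivative_within_alt2
proof (intro conjI allI impI)
  show "bounded_linear D" by (rule bounded_linear_D)
  fix e :: real assume e: "0 < e"
  define Ks where "Ks = (\<Sum>j\<in>UNIV. norm (k j))"
  have Ks: "0 \<le> Ks" by (simp add: Ks_def sum_nonneg)
  define e' where "e' = 2 * lam * e / (Ks + 1)"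
  have e': "0 < e'" using lam_pos e Ks by (simp add: e'_def)
  have "eventually (\<lambda>v. \<forall>j. \<bar>taylor_rem v j\<bar> \<le> e' * norm (v - u0)) (at u0)"
    by (intro eventually_all_finite taylor_rem_small e')
  with eventually_in_ball_at_u0
  show "eventually (\<lambda>v. norm (minimiser v - minimiser u0 - D (v - u0)) \<le> e * norm (v - u0)) (at u0)"
  proof eventually_elim
    case (elim v)
    define x where "x = minimiser v - f0 - D (v - u0)"
    have "hess x = (\<Sum>j\<in>UNIV. taylor_rem v j *\<^sub>R k j)"
      using hess_minimiser_diff[OF elim(1)] by (simp add: x_def linear_diff[OF linear_hess] hess_D)
    then have "norm (hess x) \<le> (\<Sum>j\<in>UNIV. \<bar>taylor_rem v j\<bar> * norm (k j))"
      using norm_sum[of "\<lambda>j. taylor_rem v j *\<^sub>R k j" UNIV] by simp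
    with norm_hess_ge have "2 * lam * norm x \<le> (\<Sum>j\<in>UNIV. \<bar>taylor_rem v j\<bar> * norm (k j))"
      by (rule order_trans)
    also have "\<dots> \<le> (\<Sum>j\<in>UNIV. e' * norm (v - u0) * norm (k j))"
      using elim(2) by (intro sum_mono mult_right_mono) auto
    also have "\<dots> = e' * norm (v - u0) * Ks"
      by (simp add: Ks_def sum_distrib_left)
    also have "\<dots> = 2 * lam * (e * norm (v - u0)) * (Ks / (Ks + 1))"
      by (simp add: e'_def ac_simps)
    also have "\<dots> \<le> 2 * lam * (e * norm (v - u0))"
      using lam_pos e Ks by (intro mult_left_le) auto
    finally show ?case using lam_pos by (simp add: x_def f0_def)
  qed
qed

end

section \<open>The empirical risk with one extra test point\<close>

lemma sum_UNIV_sum_bool: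
  "(\<Sum>j\<in>UNIV. h j) = (\<Sum>i\<in>UNIV. h (Inl i)) + h (Inr True) + h (Inr False)"
  for h :: "'i::finite + bool \<Rightarrow> 'a::comm_monoid_add"
proof -
  have "(\<Sum>j\<in>UNIV. h j) = (\<Sum>i\<in>UNIV. h (Inl i)) + (\<Sum>b\<in>UNIV. h (Inr b))"
    by (simp add: UNIV_Plus_UNIV[symmetric] sum.Plus del: UNIV_Plus_UNIV)
  then show ?thesis by (simp add: UNIV_bool ac_simps)
qed

lemma uvec_nth [simp]: "uvec $ Inl i = 1" "uvec $ Inr b = (if b then 1 else 0)"
  by (simp_all add: uvec_def)

lemma wvec_nth [simp]: "wvec $ Inl i = 1" "wvec $ Inr b = (if b then 0 else 1)"
  by (simp_all add: wvec_def)

locale empirical_risk =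
  fixes loss loss1 loss2 :: "real \<Rightarrow> real \<Rightarrow> real" and Ys :: "real set"
    and K :: "'x \<Rightarrow> 'h::{real_inner,complete_space}"
    and X :: "'i::finite \<Rightarrow> 'x" and Y :: "'i \<Rightarrow> real" and Xn :: 'x
    and lam beta y z :: real
  assumes lam: "0 < lam" and beta: "0 < beta"
    and Y_in: "\<And>i. Y i \<in> Ys" and y_in: "y \<in> Ys" and z_in: "z \<in> Ys"
    and convex_loss: "\<And>a. a \<in> Ys \<Longrightarrow> convex_on UNIV (loss a)"
    and loss_deriv: "\<And>a u. a \<in> Ys \<Longrightarrow> (loss a has_real_derivative loss1 a u) (at u)"
    and loss1_deriv: "\<And>a u. a \<in> Ys \<Longrightarrow> (loss1 a has_real_derivative loss2 a u) (at u)"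
    and loss1_Lipschitz: "\<And>a u u'. a \<in> Ys \<Longrightarrow> \<bar>loss1 a u - loss1 a u'\<bar> \<le> beta * \<bar>u - u'\<bar>"
begin

definition N :: real where
  "N = real CARD('i) + 1"

definition lab :: "'i + bool \<Rightarrow> real" where
  "lab j = (case j of Inl i \<Rightarrow> Y i | Inr b \<Rightarrow> if b then z else y)"

definition feat :: "'i + bool \<Rightarrow> 'h" where
  "feat j = (case j of Inl i \<Rightarrow> K (X i) | Inr _ \<Rightarrow> K Xn)"

lemma N_pos: "0 < N"
  by (simp add: N_def add_nonneg_pos)

lemma card_eq_N [simp]: "real CARD('i) + 1 = N"
  by (simp add: N_def)

lemma lab_simps [simp]: "lab (Inl i) = Y i" "lab (Inr True) = z" "lab (Inr False) = y"
  by (simp_all add: lab_def)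

lemma feat_simps [simp]: "feat (Inl i) = K (X i)" "feat (Inr b) = K Xn"
  by (simp_all add: feat_def)

lemma lab_in: "lab j \<in> Ys"
  by (cases j) (simp_all add: lab_def Y_in y_in z_in)

sublocale weighted_risk "\<lambda>j u. loss (lab j) u / N" "\<lambda>j u. loss1 (lab j) u / N"
  "\<lambda>j u. loss2 (lab j) u / N" feat lam "beta / N" uvec
proof
  show "0 < lam" by (rule lam)
  show "0 < beta / N" using beta N_pos by simp
  show "convex_on UNIV (\<lambda>u. loss (lab j) u / N)" for j
    using convex_loss[OF lab_in] N_pos by (intro convex_on_cdiv) auto
  show "((\<lambda>u. loss (lab j) u / N) has_real_derivative loss1 (lab j) u / N) (at u)" for j u
    using loss_deriv[OF lab_in] by (rule DERIV_cdivide)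
  show "((\<lambda>u. loss1 (lab j) u / N) has_real_derivative loss2 (lab j) u / N) (at u)" for j u
    using loss1_deriv[OF lab_in] by (rule DERIV_cdivide)
  show "\<bar>loss1 (lab j) u / N - loss1 (lab j) u' / N\<bar> \<le> beta / N * \<bar>u - u'\<bar>" for j u u'
    using loss1_Lipschitz[OF lab_in, of j u u'] N_pos
    by (simp add: diff_divide_distrib[symmetric] divide_right_mono)
  show "0 \<le> (uvec :: real^('i + bool)) $ j" for j
    by (cases j) simp_all
qed

lemma Rhat_eq_R: "Rhat loss K lam X Y Xn z y = R"
  by (intro ext) (simp add: Rhat_def R_def sum_UNIV_sum_bool evalH_def sum_divide_distrib)

lemma fhat_eq_minimiser: "fhat loss K lam X Y Xn z y = minimiser"
  by (intro ext) (simp add: fhat_def minimiser_def Rhat_eq_R)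

lemma range_feat: "range feat = insert (K Xn) (range (\<lambda>i. K (X i)))"
proof
  show "range feat \<subseteq> insert (K Xn) (range (\<lambda>i. K (X i)))"
    by (auto simp: feat_def split: sum.split)
  have "K Xn \<in> range feat" by (rule range_eqI[of _ _ "Inr True"]) simp
  moreover have "K (X i) \<in> range feat" for i by (rule range_eqI[of _ _ "Inl i"]) simp
  ultimately show "insert (K Xn) (range (\<lambda>i. K (X i))) \<subseteq> range feat" by auto
qed

lemma Aspace_eq: "Aspace K X Xn = span (range feat)"
  by (simp add: Aspace_def range_feat)

lemma KXn_in_span: "K Xn \<in> span (range feat)"
  by (simp add: range_feat span_base)

lemma hessR_eq_hess: "hessR loss2 K lam X Y Xn z y uvec f0 = hess"
  by (intro ext) (simp add: hessR_def hess_def sum_UNIV_sum_bool evalH_def)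

lemma Iinf_eq:
  "Iinf loss loss1 loss2 K lam X Y Xn z y z' = (- loss1 z' (inner f0 (K Xn)) / N) *\<^sub>R hess_inv (K Xn)"
  by (simp add: Iinf_def Let_def fhat_eq_minimiser f0_def[symmetric] hessR_eq_hess Aspace_eq
      restr_inv_hess[OF KXn_in_span] evalH_def)

lemma Iinf_in_Aspace: "Iinf loss loss1 loss2 K lam X Y Xn z y z' \<in> Aspace K X Xn"
  unfolding Iinf_eq Aspace_eq by (intro span_scale hess_inv_in_span KXn_in_span)

lemma D_wvec:
  "D (wvec - uvec) = - Iinf loss loss1 loss2 K lam X Y Xn z y z + Iinf loss loss1 loss2 K lam X Y Xn z y y"
proof -
  have dg: "data_grad f0 (wvec - uvec)
      = (loss1 y (inner f0 (K Xn)) / N - loss1 z (inner f0 (K Xn)) / N) *\<^sub>R K Xn"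
    by (simp add: data_grad_def sum_UNIV_sum_bool algebra_simps)
  show ?thesis
    unfolding D_def dg linear_scale[OF linear_hess_inv] by (simp add: Iinf_eq algebra_simps)
qed

lemma risk_mixture_Pemp:
  assumes "0 \<le> t" "t \<le> 1"
  shows "risk loss K lam (mixture t (Pemp X Y Xn z) (Pemp X Y Xn y)) = R (uvec + t *\<^sub>R (wvec - uvec))"
proof
  fix f
  define S where "S = (\<Sum>i\<in>UNIV. loss (Y i) (inner f (K (X i))))"
  have "risk loss K lam (mixture t (Pemp X Y Xn z) (Pemp X Y Xn y)) f
      = (1 - t) * ((S + loss z (inner f (K Xn))) / N) + t * ((S + loss y (inner f (K Xn))) / N)
        + lam * (norm f)^2"
    using assms by (simp add: risk_def expectation_mixture set_pmf_Pemp expectation_Pemp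
        S_def evalH_def)
  also have "\<dots> = R (uvec + t *\<^sub>R (wvec - uvec)) f"
    using N_pos by (simp add: R_def sum_UNIV_sum_bool S_def sum_divide_distrib[symmetric] field_simps)
  finally show "risk loss K lam (mixture t (Pemp X Y Xn z) (Pemp X Y Xn y)) f
      = R (uvec + t *\<^sub>R (wvec - uvec)) f" .
qed

lemma T_mixture_eq_minimiser:
  assumes T_min: "\<And>Q. finite (set_pmf Q) \<Longrightarrow> set_pmf Q \<subseteq> UNIV \<times> Ys \<Longrightarrow>
      (\<exists>f. \<forall>g. risk loss K lam Q f \<le> risk loss K lam Q g) \<Longrightarrow>
      (\<forall>g. risk loss K lam Q (T Q) \<le> risk loss K lam Q g)"
    and t: "0 \<le> t" "t \<le> 1" "uvec + t *\<^sub>R (wvec - uvec) \<in> ball (uvec :: real^('i + bool)) rad"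
  shows "T (mixture t (Pemp X Y Xn z) (Pemp X Y Xn y)) = minimiser (uvec + t *\<^sub>R (wvec - uvec))"
proof -
  let ?Q = "mixture t (Pemp X Y Xn z) (Pemp X Y Xn y)"
  have "finite (set_pmf ?Q)"
    by (auto simp: mixture_def set_pmf_Pemp)
  moreover have "set_pmf ?Q \<subseteq> UNIV \<times> Ys"
    using Y_in y_in z_in by (auto simp: mixture_def set_pmf_Pemp split: if_splits)
  moreover have "\<exists>f. \<forall>g. risk loss K lam ?Q f \<le> risk loss K lam ?Q g"
    using minimiser_le[OF t(3)] by (auto simp: risk_mixture_Pemp[OF t(1,2)])
  ultimately have "\<forall>g. risk loss K lam ?Q (T ?Q) \<le> risk loss K lam ?Q g"
    by (rule T_min)
  then show ?thesis
    by (intro minimiser_unique[OF t(3), symmetric]) (simp add: risk_mixture_Pemp[OF t(1,2)])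
qed

lemma has_BIF_D:
  assumes T_min: "\<And>Q. finite (set_pmf Q) \<Longrightarrow> set_pmf Q \<subseteq> UNIV \<times> Ys \<Longrightarrow>
      (\<exists>f. \<forall>g. risk loss K lam Q f \<le> risk loss K lam Q g) \<Longrightarrow>
      (\<forall>g. risk loss K lam Q (T Q) \<le> risk loss K lam Q g)"
  shows "has_BIF T (Pemp X Y Xn y) (Pemp X Y Xn z) (D (wvec - uvec))"
proof -
  define dw :: "real^('i + bool)" where "dw = wvec - uvec"
  have T0: "T (Pemp X Y Xn z) = minimiser uvec"
    using T_mixture_eq_minimiser[OF T_min, of 0] rad_pos by simp
  have "eventually (\<lambda>t. 0 < t \<and> t < 1 \<and> uvec + t *\<^sub>R dw \<in> ball uvec rad) (at_right 0)"
  proof (intro eventually_conj eventually_at_right_less)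
    show "eventually (\<lambda>t. t < 1) (at_right (0::real))"
      by (rule order_tendstoD(2)[OF tendsto_ident_at]) simp
    have "((\<lambda>t. uvec + t *\<^sub>R dw) \<longlongrightarrow> uvec) (at_right 0)"
      by (auto intro!: tendsto_eq_intros)
    then show "eventually (\<lambda>t. uvec + t *\<^sub>R dw \<in> ball uvec rad) (at_right 0)"
      by (rule topological_tendstoD) (simp_all add: rad_pos)
  qed
  then have "eventually (\<lambda>t. (1 / t) *\<^sub>R (minimiser (uvec + t *\<^sub>R dw) - minimiser uvec)
      = (1 / t) *\<^sub>R (T (mixture t (Pemp X Y Xn z) (Pemp X Y Xn y)) - T (Pemp X Y Xn z))) (at_right 0)"
    by (rule eventually_mono) (simp add: T0 T_mixture_eq_minimiser[OF T_min] dw_def)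
  with has_derivative_imp_difference_quotient_at_right[OF has_derivative_minimiser]
  show ?thesis unfolding has_BIF_def dw_def[symmetric] by (rule Lim_transform_eventually)
qed

end

theorem lemma16:
  fixes loss loss1 loss2 :: "real \<Rightarrow> real \<Rightarrow> real"
    and Ys :: "real set"
    and K :: "'x \<Rightarrow> 'h::{real_inner, complete_space}"
    and X :: "'i::finite \<Rightarrow> 'x" and Y :: "'i \<Rightarrow> real" and Xn :: 'x
    and lam beta :: real
    and T :: "('x \<times> real) pmf \<Rightarrow> 'h"
    and y z :: real
  assumes lam: "lam > 0"
    and beta: "beta > 0"
    and Y_in: "\<And>i. Y i \<in> Ys"
    and y_in: "y \<in> Ys" and z_in: "z \<in> Ys"
    and convex: "\<And>a. a \<in> Ys \<Longrightarrow> convex_on UNIV (loss a)"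
    and d1: "\<And>a u. a \<in> Ys \<Longrightarrow> (loss a has_real_derivative loss1 a u) (at u)"
    and d2: "\<And>a u. a \<in> Ys \<Longrightarrow> (loss1 a has_real_derivative loss2 a u) (at u)"
    and d2_cont: "\<And>a. a \<in> Ys \<Longrightarrow> continuous_on UNIV (loss2 a)"
    and lip: "\<And>a u u'. a \<in> Ys \<Longrightarrow> \<bar>loss1 a u - loss1 a u'\<bar> \<le> beta * \<bar>u - u'\<bar>"
    and T_min: "\<And>Q. finite (set_pmf Q) \<Longrightarrow> set_pmf Q \<subseteq> UNIV \<times> Ys \<Longrightarrow>
                  (\<exists>f. \<forall>g. risk loss K lam Q f \<le> risk loss K lam Q g) \<Longrightarrow>
                  (\<forall>g. risk loss K lam Q (T Q) \<le> risk loss K lam Q g)"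
  shows "\<exists>D. (fhat loss K lam X Y Xn z y has_derivative D) (at uvec)
           \<and> has_BIF T (Pemp X Y Xn y) (Pemp X Y Xn z) (D (wvec - uvec))
           \<and> D (wvec - uvec) = - Iinf loss loss1 loss2 K lam X Y Xn z y z
                                + Iinf loss loss1 loss2 K lam X Y Xn z y y
           \<and> Iinf loss loss1 loss2 K lam X Y Xn z y z \<in> Aspace K X Xn
           \<and> Iinf loss loss1 loss2 K lam X Y Xn z y y \<in> Aspace K X Xn"
proof -
  interpret empirical_risk loss loss1 loss2 Ys K X Y Xn lam beta y z
    by unfold_locales (fact lam beta Y_in y_in z_in convex d1 d2 lip)+
  show ?thesis
    using has_derivative_minimiser has_BIF_D[OF T_min] D_wvec Iinf_in_Aspace
    by (intro exI[of _ D]) (simp add: fhat_eq_minimiser)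
qed

end
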